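(* Let $C\subseteq\{0,1\}^m$ be a code and let $t:[m]\to\mathbb{Z}$ be any function. For $s\in\mathbb{Z}$ let $I_s=t^{-1}(s)\subseteq[m]$. For a nonzero $c\in C$ let $\mathrm{type}(c)=\max\{t(i): c_i=1\}$, and for $s\in\mathbb{Z}$ let $C_s=\{c\in C\setminus\{0\} : \mathrm{type}(c)=s\}$. Then \[ \sum_{s\in\mathbb{Z}} \mathrm{CL}\big((C_s\cup C_{s+1})|_{I_s}\big)\le 2\,\mathrm{CL}(C). \]
   Context: For $S\subseteq[m]$ and $D\subseteq\{0,1\}^m$, $D|_S=\{c|_S : c\in D\}\subseteq\{0,1\}^S$. A chain of length $\ell$ in a code $D\subseteq\{0,1\}^A$ is a pair of injective maps $a:[\ell]\to A$ and $c:[\ell]\to D$ such that $c(i)_{a(i)}=1$ for all $i$, and $c(i)_{a(j)}=0$ for all $1\le i<j\le\ell$; the chain length $\mathrm{CL}(D)$ is the maximum length of a chain in $D$ ($0$ if none exists, in particular for $D$ empty). *)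

theory Defs
  imports Main "HOL-Library.FuncSet" "HOL-Library.Groups_Big_Fun"
begin

text \<open>Binary words on a coordinate set A are the extensional functions in
  the extensional function space from A to {0,1}; a code on A is a subset of this set.
  The index set [m] is {1..m}.\<close>

definition restr_code :: "nat set \<Rightarrow> (nat \<Rightarrow> nat) set \<Rightarrow> (nat \<Rightarrow> nat) set" where
  "restr_code S D = (\<lambda>c. restrict c S) ` D"

definition is_chain ::
  "nat set \<Rightarrow> (nat \<Rightarrow> nat) set \<Rightarrow> nat \<Rightarrow> (nat \<Rightarrow> nat) \<Rightarrow> (nat \<Rightarrow> (nat \<Rightarrow> nat)) \<Rightarrow> bool" where
  "is_chain A D l a c \<longleftrightarrow>
     inj_on a {1..l} \<and> a ` {1..l} \<subseteq> A \<and>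
     inj_on c {1..l} \<and> c ` {1..l} \<subseteq> D \<and>
     (\<forall>i\<in>{1..l}. c i (a i) = 1) \<and>
     (\<forall>i j. 1 \<le> i \<and> i < j \<and> j \<le> l \<longrightarrow> c i (a j) = 0)"

definition CL :: "nat set \<Rightarrow> (nat \<Rightarrow> nat) set \<Rightarrow> nat" where
  "CL A D = Sup {l. \<exists>a c. is_chain A D l a c}"

definition zero_word :: "nat \<Rightarrow> (nat \<Rightarrow> nat)" where
  "zero_word m = restrict (\<lambda>_. 0) {1..m}"

definition ctype :: "nat \<Rightarrow> (nat \<Rightarrow> int) \<Rightarrow> (nat \<Rightarrow> nat) \<Rightarrow> int" where
  "ctype m t c = Max {t i | i. i \<in> {1..m} \<and> c i = 1}"

definition code_layer :: "nat \<Rightarrow> (nat \<Rightarrow> int) \<Rightarrow> (nat \<Rightarrow> nat) set \<Rightarrow> int \<Rightarrow> (nat \<Rightarrow> nat) set" where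
  "code_layer m t C s = {c \<in> C. c \<noteq> zero_word m \<and> ctype m t c = s}"

definition level_set :: "nat \<Rightarrow> (nat \<Rightarrow> int) \<Rightarrow> int \<Rightarrow> nat set" where
  "level_set m t s = {i \<in> {1..m}. t i = s}"

end

theory Submission
  imports Defs
begin

(* Group the types by parity. If s < s' have the same parity then s + 2 <= s', so every word
   of C_s and of C_{s+1} has type below s' and vanishes on I_{s'}. Chains of the restricted codes
   lift to chains of C_s and C_{s+1} on the same coordinates, and concatenating them in increasing
   order of type gives a chain of C. Hence each parity class contributes at most CL(C). *)

lemma is_chain_length_le_card:
  assumes "is_chain A D l a c" "finite A"
  shows "l \<le> card A"
proof -
  have "card {1..l} \<le> card A"
    using assms by (intro card_inj_on_le[of a]) (auto simp: is_chain_def)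
  thus ?thesis by simp
qed

lemma finite_chain_lengths: "finite A \<Longrightarrow> finite {l. \<exists>a c. is_chain A D l a c}"
  by (rule finite_subset[of _ "{..card A}"]) (auto dest: is_chain_length_le_card)

lemma chain_length_le_CL:
  assumes "is_chain A D l a c" "finite A"
  shows "l \<le> CL A D"
  unfolding CL_def using finite_chain_lengths[OF assms(2)] assms(1)
  by (auto intro: le_cSup_finite)

lemma CL_attained:
  assumes "finite A"
  obtains a c where "is_chain A D (CL A D) a c"
proof -
  let ?L = "{l. \<exists>a c. is_chain A D l a c}"
  have "is_chain A D 0 a c" for a c by (simp add: is_chain_def)
  hence "?L \<noteq> {}" by blast
  with finite_chain_lengths[OF assms] have "Sup ?L \<in> ?L"
    using Max_in cSup_eq_Max by metis
  with that show ?thesis unfolding CL_def by blast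
qed

lemma image_append_fun:
  fixes l1 l2 :: nat
  shows "(\<lambda>i. if i \<le> l1 then f i else g (i - l1)) ` {1..l1 + l2} = f ` {1..l1} \<union> g ` {1..l2}"
proof (intro equalityI subsetI)
  fix y assume "y \<in> (\<lambda>i. if i \<le> l1 then f i else g (i - l1)) ` {1..l1 + l2}"
  then obtain i where i: "i \<in> {1..l1 + l2}" "y = (if i \<le> l1 then f i else g (i - l1))" by blast
  show "y \<in> f ` {1..l1} \<union> g ` {1..l2}"
  proof (cases "i \<le> l1")
    case True
    with i show ?thesis by auto
  next
    case False
    with i have "i - l1 \<in> {1..l2}" "y = g (i - l1)" by auto
    thus ?thesis by blast
  qed
next
  fix y assume "y \<in> f ` {1..l1} \<union> g ` {1..l2}"
  then consider i where "i \<in> {1..l1}" "y = f i" | j where "j \<in> {1..l2}" "y = g j" by blast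
  thus "y \<in> (\<lambda>i. if i \<le> l1 then f i else g (i - l1)) ` {1..l1 + l2}"
    by cases (force intro: image_eqI[where x = "_ + l1"])+
qed

lemma inj_on_append_fun:
  fixes l1 l2 :: nat
  assumes "inj_on f {1..l1}" "inj_on g {1..l2}" "f ` {1..l1} \<inter> g ` {1..l2} = {}"
  shows "inj_on (\<lambda>i. if i \<le> l1 then f i else g (i - l1)) {1..l1 + l2}"
proof (rule eq_card_imp_inj_on)
  show "card ((\<lambda>i. if i \<le> l1 then f i else g (i - l1)) ` {1..l1 + l2}) = card {1..l1 + l2}"
    unfolding image_append_fun using assms by (simp add: card_Un_disjoint card_image)
qed simp

(* No disjointness hypotheses are needed: words of D1 vanish on A2, while c2 j is 1 at a2 j. *)
lemma is_chain_append:
  assumes ch1: "is_chain A1 D1 l1 a1 c1" and ch2: "is_chain A2 D2 l2 a2 c2"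
    and vanish: "\<forall>w\<in>D1. \<forall>x\<in>A2. w x = 0"
  shows "is_chain (A1 \<union> A2) (D1 \<union> D2) (l1 + l2)
           (\<lambda>i. if i \<le> l1 then a1 i else a2 (i - l1)) (\<lambda>i. if i \<le> l1 then c1 i else c2 (i - l1))"
    (is "is_chain _ _ _ ?a ?c")
proof -
  have cross: "c1 i (a2 j) = 0" if "i \<in> {1..l1}" "j \<in> {1..l2}" for i j
    using vanish ch1 ch2 that by (auto simp: is_chain_def image_subset_iff)
  have ones1: "c1 i (a1 i) = 1" if "i \<in> {1..l1}" for i
    using ch1 that by (simp add: is_chain_def)
  have ones2: "c2 j (a2 j) = 1" if "j \<in> {1..l2}" for j
    using ch2 that by (simp add: is_chain_def)
  have "a1 i \<noteq> a2 j" "c1 i \<noteq> c2 j" if "i \<in> {1..l1}" "j \<in> {1..l2}" for i j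
    using cross[OF that] ones1[OF that(1)] ones2[OF that(2)] by auto
  hence disjoint: "a1 ` {1..l1} \<inter> a2 ` {1..l2} = {}" "c1 ` {1..l1} \<inter> c2 ` {1..l2} = {}"
    by blast+
  show ?thesis
    unfolding is_chain_def
  proof (intro conjI ballI allI impI)
    show "inj_on ?a {1..l1 + l2}" "inj_on ?c {1..l1 + l2}"
      using ch1 ch2 disjoint unfolding is_chain_def by (intro inj_on_append_fun; blast)+
    have "a1 ` {1..l1} \<subseteq> A1" "a2 ` {1..l2} \<subseteq> A2" "c1 ` {1..l1} \<subseteq> D1" "c2 ` {1..l2} \<subseteq> D2"
      using ch1 ch2 by (simp_all add: is_chain_def)
    thus "?a ` {1..l1 + l2} \<subseteq> A1 \<union> A2" "?c ` {1..l1 + l2} \<subseteq> D1 \<union> D2"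
      unfolding image_append_fun by blast+
  next
    fix i assume i: "i \<in> {1..l1 + l2}"
    show "?c i (?a i) = 1"
    proof (cases "i \<le> l1")
      case True
      with i ones1[of i] show ?thesis by simp
    next
      case False
      with i have "i - l1 \<in> {1..l2}" by auto
      with False ones2 show ?thesis by simp
    qed
  next
    fix i j assume ij: "1 \<le> i \<and> i < j \<and> j \<le> l1 + l2"
    show "?c i (?a j) = 0"
    proof (cases "j \<le> l1")
      case True
      with ij ch1 show ?thesis by (simp add: is_chain_def)
    next
      case j: False
      show ?thesis
      proof (cases "i \<le> l1")
        case True
        with j ij have "c1 i (a2 (j - l1)) = 0" by (intro cross) auto
        with True j show ?thesis by simp
      next
        case False
        with j ij have "1 \<le> i - l1" "i - l1 < j - l1" "j - l1 \<le> l2" by auto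
        with ch2 have "c2 (i - l1) (a2 (j - l1)) = 0" unfolding is_chain_def by blast
        with j False show ?thesis by simp
      qed
    qed
  qed
qed

lemma CL_le_card: "finite A \<Longrightarrow> CL A D \<le> card A"
  by (metis CL_attained is_chain_length_le_card)

lemma CL_mono:
  assumes "A \<subseteq> B" "D \<subseteq> E" "finite B"
  shows "CL A D \<le> CL B E"
proof -
  from assms obtain a c where "is_chain A D (CL A D) a c"
    using CL_attained finite_subset by metis
  with assms have "is_chain B E (CL A D) a c"
    unfolding is_chain_def by blast
  from this assms(3) show ?thesis by (rule chain_length_le_CL)
qed

lemma CL_Un_ge:
  assumes "finite A1" "finite A2" "\<forall>w\<in>D1. \<forall>x\<in>A2. w x = 0"
  shows "CL A1 D1 + CL A2 D2 \<le> CL (A1 \<union> A2) (D1 \<union> D2)"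
proof -
  obtain a1 c1 a2 c2 where "is_chain A1 D1 (CL A1 D1) a1 c1" "is_chain A2 D2 (CL A2 D2) a2 c2"
    using CL_attained assms(1,2) by metis
  from is_chain_append[OF this assms(3)] show ?thesis
    by (rule chain_length_le_CL) (simp add: assms)
qed

lemma CL_restr_code_le:
  assumes "finite I"
  shows "CL I (restr_code I E) \<le> CL I E"
proof -
  define l where "l = CL I (restr_code I E)"
  obtain a c where ch: "is_chain I (restr_code I E) l a c"
    unfolding l_def using CL_attained[OF assms] .
  have "\<forall>i\<in>{1..l}. \<exists>e\<in>E. c i = restrict e I"
    using ch unfolding is_chain_def restr_code_def by blast
  then obtain e where e: "\<And>i. i \<in> {1..l} \<Longrightarrow> e i \<in> E \<and> c i = restrict (e i) I"
    by metis
  have "is_chain I E l a e"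
  proof -
    have "e i (a j) = c i (a j)" if "i \<in> {1..l}" "j \<in> {1..l}" for i j
      using e[OF that(1)] ch that(2) unfolding is_chain_def by (auto simp: image_subset_iff)
    moreover have "inj_on e {1..l}"
      using ch e unfolding is_chain_def inj_on_def by metis
    ultimately show ?thesis
      using ch e unfolding is_chain_def by auto
  qed
  from this assms show ?thesis unfolding l_def by (rule chain_length_le_CL)
qed

lemma sum_CL_le_CL_UN:
  fixes T :: "'i::linorder set"
  assumes "finite T" "\<And>s. s \<in> T \<Longrightarrow> finite (A s)"
    and "\<And>s s'. s \<in> T \<Longrightarrow> s' \<in> T \<Longrightarrow> s < s' \<Longrightarrow> \<forall>w\<in>D s. \<forall>x\<in>A s'. w x = 0"
  shows "(\<Sum>s\<in>T. CL (A s) (D s)) \<le> CL (\<Union>s\<in>T. A s) (\<Union>s\<in>T. D s)"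
  using assms
proof (induction T rule: finite_linorder_max_induct)
  case empty
  show ?case by simp
next
  case (insert b T)
  have "(\<Sum>s\<in>insert b T. CL (A s) (D s)) = (\<Sum>s\<in>T. CL (A s) (D s)) + CL (A b) (D b)"
    using insert.hyps by (subst sum.insert) auto
  also have "\<dots> \<le> CL (\<Union>s\<in>T. A s) (\<Union>s\<in>T. D s) + CL (A b) (D b)"
    by (intro add_right_mono insert.IH; meson insert.prems insertCI)
  also have "\<dots> \<le> CL ((\<Union>s\<in>T. A s) \<union> A b) ((\<Union>s\<in>T. D s) \<union> D b)"
  proof (rule CL_Un_ge)
    show "\<forall>w\<in>(\<Union>s\<in>T. D s). \<forall>x\<in>A b. w x = 0"
    proof (intro ballI)
      fix w x assume "w \<in> (\<Union>s\<in>T. D s)" "x \<in> A b"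
      then obtain s where "s \<in> T" "w \<in> D s" by blast
      with insert.hyps(2) insert.prems(2)[of s b] \<open>x \<in> A b\<close> show "w x = 0" by auto
    qed
  qed (use insert.prems(1) insert.hyps(1) in simp_all)
  also have "\<dots> = CL (\<Union>s\<in>insert b T. A s) (\<Union>s\<in>insert b T. D s)"
    by (simp add: Un_commute)
  finally show ?case .
qed

abbreviation adjacent_layers :: "nat \<Rightarrow> (nat \<Rightarrow> int) \<Rightarrow> (nat \<Rightarrow> nat) set \<Rightarrow> int \<Rightarrow> (nat \<Rightarrow> nat) set" where
  "adjacent_layers m t C s \<equiv> code_layer m t C s \<union> code_layer m t C (s + 1)"

lemma word_vanishes_above_ctype:
  assumes "c \<in> {1..m} \<rightarrow>\<^sub>E {0, 1}" "x \<in> {1..m}" "ctype m t c < t x"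
  shows "c x = 0"
proof (rule ccontr)
  assume "c x \<noteq> 0"
  moreover have "c x \<in> {0, 1}" using assms(1,2) by (rule PiE_mem)
  ultimately have "c x = 1" by simp
  with assms(2) have "t x \<le> ctype m t c" unfolding ctype_def by (intro Max_ge) auto
  with assms(3) show False by simp
qed

lemma adjacent_layers_vanish:
  assumes "C \<subseteq> {1..m} \<rightarrow>\<^sub>E {0, 1}" "w \<in> adjacent_layers m t C s" "x \<in> level_set m t s'"
    and "s + 2 \<le> s'"
  shows "w x = 0"
proof -
  have "w \<in> C" "ctype m t w \<le> s + 1" using assms(2) by (auto simp: code_layer_def)
  with assms(1) have "w \<in> {1..m} \<rightarrow>\<^sub>E {0, 1}" "ctype m t w \<le> s + 1" by blast+
  moreover have "x \<in> {1..m}" "t x = s'" using assms(3) by (auto simp: level_set_def)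
  ultimately show ?thesis
    using assms(1,4) by (intro word_vanishes_above_ctype[of w m x t]) auto
qed

lemma sum_spaced_layers_le_CL:
  assumes C: "C \<subseteq> {1..m} \<rightarrow>\<^sub>E {0, 1}" and "finite T"
    and spaced: "\<And>s s'. s \<in> T \<Longrightarrow> s' \<in> T \<Longrightarrow> s < s' \<Longrightarrow> s + 2 \<le> s'"
  shows "(\<Sum>s\<in>T. CL (level_set m t s) (restr_code (level_set m t s) (adjacent_layers m t C s)))
           \<le> CL {1..m} C"
proof -
  have fin: "finite (level_set m t s)" for s by (simp add: level_set_def)
  have "(\<Sum>s\<in>T. CL (level_set m t s) (restr_code (level_set m t s) (adjacent_layers m t C s)))
          \<le> (\<Sum>s\<in>T. CL (level_set m t s) (adjacent_layers m t C s))"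
    using fin by (intro sum_mono CL_restr_code_le)
  also have "\<dots> \<le> CL (\<Union>s\<in>T. level_set m t s) (\<Union>s\<in>T. adjacent_layers m t C s)"
    using \<open>finite T\<close> fin adjacent_layers_vanish[OF C] spaced by (intro sum_CL_le_CL_UN) auto
  also have "\<dots> \<le> CL {1..m} C"
    by (intro CL_mono) (auto simp: level_set_def code_layer_def)
  finally show ?thesis .
qed

theorem mainTheorem9:
  fixes m :: nat and C :: "(nat \<Rightarrow> nat) set" and t :: "nat \<Rightarrow> int"
  assumes "C \<subseteq> {1..m} \<rightarrow>\<^sub>E {0, 1}"
  shows "Sum_any (\<lambda>s. CL (level_set m t s)
            (restr_code (level_set m t s) (code_layer m t C s \<union> code_layer m t C (s + 1))))
         \<le> 2 * CL {1..m} C"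
proof -
  let ?f = "\<lambda>s. CL (level_set m t s) (restr_code (level_set m t s) (adjacent_layers m t C s))"
  let ?S = "t ` {1..m}"
  have same_parity_spaced: "s + 2 \<le> s'" if "s < s'" "even s \<longleftrightarrow> even s'" for s s' :: int
    using that by presburger
  have "Sum_any ?f = sum ?f ?S"
  proof (rule Sum_any.expand_superset)
    show "{s. ?f s \<noteq> 0} \<subseteq> ?S"
    proof
      fix s assume "s \<in> {s. ?f s \<noteq> 0}"
      hence "level_set m t s \<noteq> {}" using CL_le_card[of "{}"] by force
      thus "s \<in> ?S" by (auto simp: level_set_def)
    qed
  qed simp
  also have "\<dots> = sum ?f {s \<in> ?S. even s} + sum ?f {s \<in> ?S. odd s}"
    by (subst sum.union_disjoint[symmetric]) (auto intro!: sum.cong)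
  also have "\<dots> \<le> CL {1..m} C + CL {1..m} C"
    using assms same_parity_spaced by (intro add_mono sum_spaced_layers_le_CL) auto
  finally show ?thesis by simp
qed

end
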